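(* Let $n>1$ and $m>1$ be integers and let $G$ be an $r$-regular bipartite graph of order $m$ (with $r\geq 1$). Then $\chi_{ld}(G[\overline{K_{n}}])=2$.
   Context: All graphs are finite, simple and undirected. For a graph $G=(V,E)$ of order $N$ without isolated vertices, a bijection $f\colon V\to\{1,2,\dots,N\}$ is a local distance antimagic labeling if $w(u)\neq w(v)$ for every edge $uv$, where $w(u)=\sum_{x\in N(u)}f(x)$ and $N(u)$ is the open neighborhood of $u$. $\chi_{ld}(G)$ is the minimum number of distinct weights over all local distance antimagic labelings of $G$. $\overline{K_n}$ is the edgeless graph on $n$ vertices. The lexicographic product $G[H]$ has vertex set $V(G)\times V(H)$, with $(g,h)$ adjacent to $(g',h')$ iff $gg'\in E(G)$, or $g=g'$ and $hh'\in E(H)$. *)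

theory Defs
  imports Main
begin

definition sgraph :: "'a set \<Rightarrow> 'a set set \<Rightarrow> bool" where
  "sgraph V E \<longleftrightarrow> finite V \<and>
     (\<forall>e\<in>E. \<exists>u v. u \<noteq> v \<and> u \<in> V \<and> v \<in> V \<and> e = {u, v})"

definition nbhd :: "'a set set \<Rightarrow> 'a \<Rightarrow> 'a set" where
  "nbhd E u = {v. {u, v} \<in> E}"

definition no_isolated :: "'a set \<Rightarrow> 'a set set \<Rightarrow> bool" where
  "no_isolated V E \<longleftrightarrow> (\<forall>v\<in>V. nbhd E v \<noteq> {})"

definition regular :: "'a set \<Rightarrow> 'a set set \<Rightarrow> nat \<Rightarrow> bool" where
  "regular V E r \<longleftrightarrow> (\<forall>v\<in>V. card (nbhd E v) = r)"

definition bipartite :: "'a set \<Rightarrow> 'a set set \<Rightarrow> bool" where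
  "bipartite V E \<longleftrightarrow> (\<exists>A B. A \<union> B = V \<and> A \<inter> B = {} \<and>
      (\<forall>e\<in>E. \<exists>a\<in>A. \<exists>b\<in>B. e = {a, b}))"

definition wt :: "'a set set \<Rightarrow> ('a \<Rightarrow> nat) \<Rightarrow> 'a \<Rightarrow> nat" where
  "wt E f u = (\<Sum>x\<in>nbhd E u. f x)"

definition ld_labeling :: "'a set \<Rightarrow> 'a set set \<Rightarrow> ('a \<Rightarrow> nat) \<Rightarrow> bool" where
  "ld_labeling V E f \<longleftrightarrow> bij_betw f V {1..card V} \<and>
     (\<forall>u v. {u, v} \<in> E \<longrightarrow> wt E f u \<noteq> wt E f v)"

definition chi_ld :: "'a set \<Rightarrow> 'a set set \<Rightarrow> nat" where
  "chi_ld V E = (LEAST k. \<exists>f. ld_labeling V E f \<and> card (wt E f ` V) = k)"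

definition lexV :: "'a set \<Rightarrow> 'b set \<Rightarrow> ('a \<times> 'b) set" where
  "lexV V1 V2 = V1 \<times> V2"

definition lexE :: "'a set \<Rightarrow> 'a set set \<Rightarrow> 'b set \<Rightarrow> 'b set set \<Rightarrow> ('a \<times> 'b) set set" where
  "lexE V1 E1 V2 E2 = {{(g, h), (g', h')} | g h g' h'.
      g \<in> V1 \<and> g' \<in> V1 \<and> h \<in> V2 \<and> h' \<in> V2 \<and>
      ({g, g'} \<in> E1 \<or> (g = g' \<and> {h, h'} \<in> E2))}"

definition emptyV :: "nat \<Rightarrow> nat set" where "emptyV n = {0..<n}"
definition emptyE :: "nat \<Rightarrow> nat set set" where "emptyE n = {}"

end

(* Split the bipartite graph G into sides A and B; r-regularity forces |A| = |B| = k.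
   In G[K_n-bar] the vertex (g, h) is adjacent to every (g', h') with g' a neighbour of g,
   so its weight is the sum, over the r neighbours g' of g, of the column sums
   f(g', 0) + ... + f(g', n - 1).  It therefore suffices to fill a 2k x n array with 1, ..., 2kn
   so that all A-columns have one sum and all B-columns another: then every vertex over A has
   weight r * (B-sum) and every vertex over B has weight r * (A-sum), two distinct values.
   Since some edge exists, two weights are also necessary. *)

theory Submission
  imports Defs
begin

definition bipartition :: "'a set \<Rightarrow> 'a set set \<Rightarrow> 'a set \<Rightarrow> 'a set \<Rightarrow> bool" where
  "bipartition V E A B \<longleftrightarrow>
     A \<union> B = V \<and> A \<inter> B = {} \<and> (\<forall>e\<in>E. \<exists>a\<in>A. \<exists>b\<in>B. e = {a, b})"

lemma bipartite_iff_bipartition: "bipartite V E \<longleftrightarrow> (\<exists>A B. bipartition V E A B)"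
  unfolding bipartite_def bipartition_def ..

lemma bipartition_swap:
  assumes "bipartition V E A B"
  shows "bipartition V E B A"
  using assms unfolding bipartition_def by (metis Int_commute Un_commute insert_commute)

lemma mem_nbhd_sym: "v \<in> nbhd E u \<longleftrightarrow> u \<in> nbhd E v"
  unfolding nbhd_def by (simp add: insert_commute)

lemma bipartition_nbhd_subset:
  assumes "bipartition V E A B" "a \<in> A"
  shows "nbhd E a \<subseteq> B"
proof
  fix v assume "v \<in> nbhd E a"
  then obtain a' b where "a' \<in> A" "b \<in> B" "{a, v} = {a', b}"
    using assms(1) unfolding nbhd_def bipartition_def by blast
  with assms show "v \<in> B"
    unfolding bipartition_def by (auto simp: doubleton_eq_iff)
qed

lemma sgraph_nbhd_subset:
  assumes "sgraph V E"
  shows "nbhd E u \<subseteq> V"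
  using assms unfolding sgraph_def nbhd_def by (fastforce simp: doubleton_eq_iff)

lemma card_Sigma_nbhd_regular:
  assumes "sgraph V E" "regular V E r" "S \<subseteq> V"
  shows "card (SIGMA s:S. nbhd E s) = r * card S"
proof -
  have "finite V" using assms(1) unfolding sgraph_def by blast
  then have "card (SIGMA s:S. nbhd E s) = (\<Sum>s\<in>S. card (nbhd E s))"
    using assms(3) sgraph_nbhd_subset[OF assms(1)] by (intro card_SigmaI) (auto intro: finite_subset)
  also have "\<dots> = (\<Sum>s\<in>S. r)"
    using assms(2,3) unfolding regular_def by (intro sum.cong) auto
  finally show ?thesis by simp
qed

lemma regular_bipartition_card_eq:
  assumes "sgraph V E" "regular V E r" "r \<ge> 1" "bipartition V E A B"
  shows "card A = card B"
proof -
  have sub: "A \<subseteq> V" "B \<subseteq> V" using assms(4) unfolding bipartition_def by blast+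
  have nbhd_A: "nbhd E a \<subseteq> B" if "a \<in> A" for a
    using bipartition_nbhd_subset[OF assms(4) that] .
  have nbhd_B: "nbhd E b \<subseteq> A" if "b \<in> B" for b
    using bipartition_nbhd_subset[OF bipartition_swap[OF assms(4)] that] .
  have "(b, a) \<in> (SIGMA b:B. nbhd E b) \<longleftrightarrow> (a, b) \<in> (SIGMA a:A. nbhd E a)" for a b
    using nbhd_A[of a] nbhd_B[of b] mem_nbhd_sym[of a E b] by auto
  then have "(SIGMA b:B. nbhd E b) = (SIGMA a:A. nbhd E a)\<inverse>"
    by (auto simp only: converse_iff)
  then have "card (SIGMA b:B. nbhd E b) = card (SIGMA a:A. nbhd E a)"
    by simp
  with card_Sigma_nbhd_regular[OF assms(1,2)] sub assms(3) show ?thesis by simp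
qed

lemma lexE_emptyE_iff:
  "{(g, h), (g', h')} \<in> lexE V E (emptyV n) (emptyE n) \<longleftrightarrow>
     g \<in> V \<and> g' \<in> V \<and> h < n \<and> h' < n \<and> {g, g'} \<in> E"
proof
  assume "{(g, h), (g', h')} \<in> lexE V E (emptyV n) (emptyE n)"
  then obtain a b a' b' where ab: "{(g, h), (g', h')} = {(a, b), (a', b')}"
    "a \<in> V" "a' \<in> V" "b < n" "b' < n" "{a, a'} \<in> E"
    unfolding lexE_def emptyV_def emptyE_def by auto
  then show "g \<in> V \<and> g' \<in> V \<and> h < n \<and> h' < n \<and> {g, g'} \<in> E"
    by (auto simp: doubleton_eq_iff insert_commute)
qed (auto simp: lexE_def emptyV_def)

lemma nbhd_lex_emptyE:
  assumes "sgraph V E" "g \<in> V" "h < n"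
  shows "nbhd (lexE V E (emptyV n) (emptyE n)) (g, h) = nbhd E g \<times> {0..<n}"
  using assms sgraph_nbhd_subset[OF assms(1), of g]
  by (auto simp: nbhd_def lexE_emptyE_iff subset_iff)

lemma wt_lex_emptyE:
  assumes "sgraph V E" "g \<in> V" "h < n"
  shows "wt (lexE V E (emptyV n) (emptyE n)) f (g, h) = (\<Sum>g'\<in>nbhd E g. \<Sum>h'\<in>{0..<n}. f (g', h'))"
  unfolding wt_def nbhd_lex_emptyE[OF assms] by (simp add: sum.cartesian_product)

lemma wt_lex_emptyE_bipartition:
  assumes "sgraph V E" "regular V E r" "bipartition V E A B"
    and "\<And>b. b \<in> B \<Longrightarrow> (\<Sum>h\<in>{0..<n}. f (b, h)) = c"
    and "a \<in> A" "h < n"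
  shows "wt (lexE V E (emptyV n) (emptyE n)) f (a, h) = r * c"
proof -
  have "a \<in> V" using assms(3,5) unfolding bipartition_def by blast
  then have "wt (lexE V E (emptyV n) (emptyE n)) f (a, h) = (\<Sum>b\<in>nbhd E a. \<Sum>h\<in>{0..<n}. f (b, h))"
    using wt_lex_emptyE[OF assms(1) _ assms(6)] by blast
  also have "\<dots> = (\<Sum>b\<in>nbhd E a. c)"
    using bipartition_nbhd_subset[OF assms(3,5)] assms(4) by (intro sum.cong) auto
  also have "\<dots> = r * c"
    using \<open>a \<in> V\<close> assms(2) unfolding regular_def by simp
  finally show ?thesis .
qed

lemma chi_ld_eq_2I:
  assumes "finite V" "u \<in> V" "v \<in> V" "{u, v} \<in> E"
    and "ld_labeling V E f" "wt E f ` V \<subseteq> {c, d}"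
  shows "chi_ld V E = 2"
proof -
  have at_least_2: "2 \<le> card (wt E f' ` V)" if "ld_labeling V E f'" for f'
  proof -
    have "wt E f' u \<noteq> wt E f' v"
      using that assms(4) unfolding ld_labeling_def by blast
    moreover have "card {wt E f' u, wt E f' v} \<le> card (wt E f' ` V)"
      using assms(1-3) by (intro card_mono) auto
    ultimately show ?thesis by simp
  qed
  show ?thesis
    unfolding chi_ld_def
  proof (rule Least_equality)
    show "\<exists>f. ld_labeling V E f \<and> card (wt E f ` V) = 2"
    proof (intro exI conjI)
      have "card (wt E f ` V) \<le> card {c, d}"
        using assms(6) by (intro card_mono) auto
      also have "\<dots> \<le> 2" by (simp add: card_insert_if)
      finally show "card (wt E f ` V) = 2"
        using at_least_2[OF assms(5)] by simp
    qed (rule assms(5))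
  qed (use at_least_2 in blast)
qed

lemma ld_labeling_lex_emptyE:
  assumes "sgraph V E" "regular V E r" "r \<ge> 1" "bipartition V E A B"
    and "bij_betw f (V \<times> {0..<n}) {1..card V * n}"
    and "\<And>a. a \<in> A \<Longrightarrow> (\<Sum>h\<in>{0..<n}. f (a, h)) = cA"
    and "\<And>b. b \<in> B \<Longrightarrow> (\<Sum>h\<in>{0..<n}. f (b, h)) = cB"
    and "cA \<noteq> cB"
  shows "ld_labeling (lexV V (emptyV n)) (lexE V E (emptyV n) (emptyE n)) f"
    and "wt (lexE V E (emptyV n) (emptyE n)) f ` lexV V (emptyV n) \<subseteq> {r * cB, r * cA}"
proof -
  let ?E = "lexE V E (emptyV n) (emptyE n)"
  have wt_A: "wt ?E f (a, h) = r * cB" if "a \<in> A" "h < n" for a h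
    using wt_lex_emptyE_bipartition[OF assms(1,2,4) assms(7) that] .
  have wt_B: "wt ?E f (b, h) = r * cA" if "b \<in> B" "h < n" for b h
    using wt_lex_emptyE_bipartition[OF assms(1,2) bipartition_swap[OF assms(4)] assms(6) that] .
  have V: "lexV V (emptyV n) = V \<times> {0..<n}" "V = A \<union> B"
    using assms(4) unfolding lexV_def emptyV_def bipartition_def by auto
  show "wt ?E f ` lexV V (emptyV n) \<subseteq> {r * cB, r * cA}"
    using V wt_A wt_B by auto
  have "wt ?E f (g, h) \<noteq> wt ?E f (g', h')" if "{(g, h), (g', h')} \<in> ?E" for g h g' h'
  proof -
    have "h < n" "h' < n" "{g, g'} \<in> E"
      using that by (simp_all add: lexE_emptyE_iff)
    then obtain a b where "a \<in> A" "b \<in> B" "{g, g'} = {a, b}"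
      using assms(4) unfolding bipartition_def by blast
    then show ?thesis
      using wt_A wt_B \<open>h < n\<close> \<open>h' < n\<close> assms(3,8) by (auto simp: doubleton_eq_iff)
  qed
  then show "ld_labeling (lexV V (emptyV n)) ?E f"
    using assms(5) V(1) unfolding ld_labeling_def by (auto simp: card_cartesian_product)
qed

lemma alternating_rows_sum:
  assumes "p \<le> (K::nat)"
  shows "(\<Sum>h\<in>{s..<s + 2 * t}. if even h then p else K - p) = t * K"
proof (induction t)
  case (Suc t)
  have "{s..<s + 2 * Suc t} = insert (s + 2 * t) (insert (s + 2 * t + 1) {s..<s + 2 * t})"
    by auto
  with Suc assms show ?case by auto
qed simp

text \<open>Row \<open>h\<close> of the array holds the block \<open>2kh + 1, ..., 2kh + 2k\<close>, permuted by
  \<open>row_perm k n h\<close>.  Rows from index 2 (\<open>n\<close> even) or 3 (\<open>n\<close> odd) on alternate between identity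
  and reversal, so each pair adds \<open>2k - 1\<close> to every column.  The remaining rows 0, 1 (and 2)
  make the column sums differ between the halves \<open>p < k\<close> and \<open>p \<ge> k\<close>: row 1 reverses each
  half when \<open>n\<close> is even and interleaves the halves when \<open>n\<close> is odd.\<close>
definition row_perm :: "nat \<Rightarrow> nat \<Rightarrow> nat \<Rightarrow> nat \<Rightarrow> nat" where
  "row_perm k n h p =
    (if h = 1 then
       if even n then (if p < k then k - 1 - p else 3 * k - 1 - p)
       else (if p < k then 2 * k - 1 - 2 * p else 4 * k - 2 - 2 * p)
     else if even h then p else 2 * k - 1 - p)"

lemma row_perm_bij: "bij_betw (row_perm k n h) {0..<2 * k} {0..<2 * k}"
proof -
  have "inj_on (row_perm k n h) {0..<2 * k}"
    unfolding inj_on_def row_perm_def by (auto split: if_splits; presburger)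
  moreover have "row_perm k n h ` {0..<2 * k} \<subseteq> {0..<2 * k}"
    unfolding row_perm_def by auto
  ultimately show ?thesis
    unfolding bij_betw_def by (simp add: endo_inj_surj)
qed

lemma row_perm_sum_split:
  assumes "p < 2 * k" "2 \<le> n\<^sub>0" "n = n\<^sub>0 + 2 * t"
  shows "(\<Sum>h\<in>{0..<n}. row_perm k n h p) = (\<Sum>h\<in>{0..<n\<^sub>0}. row_perm k n h p) + t * (2 * k - 1)"
proof -
  have "(\<Sum>h\<in>{n\<^sub>0..<n}. row_perm k n h p) =
      (\<Sum>h\<in>{n\<^sub>0..<n\<^sub>0 + 2 * t}. if even h then p else (2 * k - 1) - p)"
    using assms(2,3) unfolding row_perm_def by (intro sum.cong) auto
  also have "\<dots> = t * (2 * k - 1)"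
    using assms(1) by (intro alternating_rows_sum) simp
  finally have "(\<Sum>h\<in>{n\<^sub>0..<n}. row_perm k n h p) = t * (2 * k - 1)" .
  moreover have "(\<Sum>h\<in>{0..<n}. row_perm k n h p) =
      (\<Sum>h\<in>{0..<n\<^sub>0}. row_perm k n h p) + (\<Sum>h\<in>{n\<^sub>0..<n}. row_perm k n h p)"
    using assms(3) by (intro sum.atLeastLessThan_concat[symmetric]) auto
  ultimately show ?thesis by simp
qed

lemma row_perm_column_sums:
  assumes "k \<ge> 1" "n \<ge> 2"
  obtains cA cB where "cA \<noteq> cB"
    and "\<And>p. p < k \<Longrightarrow> (\<Sum>h\<in>{0..<n}. row_perm k n h p) = cA"
    and "\<And>p. k \<le> p \<Longrightarrow> p < 2 * k \<Longrightarrow> (\<Sum>h\<in>{0..<n}. row_perm k n h p) = cB"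
proof (cases "even n")
  case True
  have "\<exists>t. n = 2 + 2 * t"
    using assms(2) True by presburger
  then obtain t where n: "n = 2 + 2 * t" ..
  have "(\<Sum>h\<in>{0..<n}. row_perm k n h p) = (if p < k then k - 1 else 3 * k - 1) + t * (2 * k - 1)"
    if "p < 2 * k" for p
    using row_perm_sum_split[OF that _ n] True that by (simp add: numeral_2_eq_2 row_perm_def)
  with assms(1) show ?thesis by (intro that[of "k - 1 + t * (2 * k - 1)" "3 * k - 1 + t * (2 * k - 1)"]) auto
next
  case False
  have "\<exists>t. n = 3 + 2 * t"
    using assms(2) False by presburger
  then obtain t where n: "n = 3 + 2 * t" ..
  have "(\<Sum>h\<in>{0..<n}. row_perm k n h p) = (if p < k then 2 * k - 1 else 4 * k - 2) + t * (2 * k - 1)"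
    if "p < 2 * k" for p
    using row_perm_sum_split[OF that _ n] False that by (simp add: numeral_3_eq_3 numeral_2_eq_2 row_perm_def)
  with assms(1) show ?thesis by (intro that[of "2 * k - 1 + t * (2 * k - 1)" "4 * k - 2 + t * (2 * k - 1)"]) auto
qed

lemma bij_betw_row_blocks:
  fixes \<sigma> :: "nat \<Rightarrow> nat \<Rightarrow> nat"
  assumes "\<And>h. h < n \<Longrightarrow> bij_betw (\<sigma> h) {0..<c} {0..<c}"
  shows "bij_betw (\<lambda>(p, h). c * h + \<sigma> h p + 1) ({0..<c} \<times> {0..<n}) {1..c * n}"
proof -
  let ?f = "\<lambda>(p, h). c * h + \<sigma> h p + 1"
  have \<sigma>_less: "\<sigma> h p < c" if "h < n" "p < c" for h p
    using bij_betwE[OF assms[OF that(1)]] that(2) by auto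
  have inj: "inj_on ?f ({0..<c} \<times> {0..<n})"
  proof (rule inj_onI, clarsimp)
    fix p h q h' assume *: "p < c" "h < n" "q < c" "h' < n" "c * h + \<sigma> h p = c * h' + \<sigma> h' q"
    have "(c * h + \<sigma> h p) div c = h" "(c * h' + \<sigma> h' q) div c = h'"
      using \<sigma>_less *(1-4) by simp_all
    then have "h = h'" "\<sigma> h p = \<sigma> h' q"
      using *(5) by simp_all
    then show "p = q \<and> h = h'"
      using assms[of h] *(1-3) unfolding bij_betw_def inj_on_def by auto
  qed
  have "?f (p, h) \<in> {1..c * n}" if "p < c" "h < n" for p h
  proof -
    have "c * h + \<sigma> h p < c * h + c" using \<sigma>_less[OF that(2,1)] by simp
    also have "\<dots> \<le> c * n" using mult_le_mono2[of "h + 1" n c] that(2) by simp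
    finally show ?thesis by simp
  qed
  then have "?f ` ({0..<c} \<times> {0..<n}) \<subseteq> {1..c * n}" by auto
  with inj show ?thesis
    unfolding bij_betw_def by (simp add: card_image card_subset_eq card_cartesian_product)
qed

lemma ex_bij_betw_disjoint_Un_halves:
  assumes "finite A" "finite B" "A \<inter> B = {}" "card A = k" "card B = k"
  obtains col where "bij_betw col (A \<union> B) {0..<2 * k}"
    and "\<And>a. a \<in> A \<Longrightarrow> col a < k" and "\<And>b. b \<in> B \<Longrightarrow> k \<le> col b"
proof -
  obtain \<alpha> where \<alpha>: "bij_betw \<alpha> A {0..<k}"
    using finite_same_card_bij[OF assms(1), of "{0..<k}"] assms(4) by auto
  obtain \<beta> where \<beta>: "bij_betw \<beta> B {k..<2 * k}"
    using finite_same_card_bij[OF assms(2), of "{k..<2 * k}"] assms(5) by auto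
  let ?col = "\<lambda>g. if g \<in> A then \<alpha> g else \<beta> g"
  have "bij_betw ?col A {0..<k}"
    using \<alpha> by (rule bij_betw_cong[THEN iffD1, rotated]) simp
  moreover have "bij_betw ?col B {k..<2 * k}"
    using \<beta> by (rule bij_betw_cong[THEN iffD1, rotated]) (use assms(3) in auto)
  ultimately have "bij_betw ?col (A \<union> B) ({0..<k} \<union> {k..<2 * k})"
    by (rule bij_betw_combine) auto
  moreover have "{0..<k} \<union> {k..<2 * k} = {0..<2 * k}" by auto
  ultimately show ?thesis
  proof (intro that)
    show "?col a < k" if "a \<in> A" for a
      using bij_betwE[OF \<alpha>] that by auto
    show "k \<le> ?col b" if "b \<in> B" for b
      using bij_betwE[OF \<beta>] that assms(3) by auto
  qed simp
qed

lemma ex_labeling_two_column_sums: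
  assumes "finite A" "finite B" "A \<inter> B = {}" "card A = card B" "A \<noteq> {}" "n \<ge> 2"
  obtains f :: "'a \<times> nat \<Rightarrow> nat" and cA cB
  where "bij_betw f ((A \<union> B) \<times> {0..<n}) {1..card (A \<union> B) * n}"
    and "\<And>a. a \<in> A \<Longrightarrow> (\<Sum>h\<in>{0..<n}. f (a, h)) = cA"
    and "\<And>b. b \<in> B \<Longrightarrow> (\<Sum>h\<in>{0..<n}. f (b, h)) = cB" and "cA \<noteq> cB"
proof -
  define k where "k = card A"
  have "k \<ge> 1" using assms(1,5) k_def by (simp add: Suc_le_eq card_gt_0_iff)
  have card_AB: "card (A \<union> B) = 2 * k"
    using assms(1-4) k_def by (simp add: card_Un_disjoint)
  obtain col where col: "bij_betw col (A \<union> B) {0..<2 * k}"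
    and col_A: "\<And>a. a \<in> A \<Longrightarrow> col a < k" and col_B: "\<And>b. b \<in> B \<Longrightarrow> k \<le> col b"
    using ex_bij_betw_disjoint_Un_halves[OF assms(1-3) k_def[symmetric]] assms(4) k_def by metis
  obtain cA cB where "cA \<noteq> cB"
    and sum_A: "\<And>p. p < k \<Longrightarrow> (\<Sum>h\<in>{0..<n}. row_perm k n h p) = cA"
    and sum_B: "\<And>p. k \<le> p \<Longrightarrow> p < 2 * k \<Longrightarrow> (\<Sum>h\<in>{0..<n}. row_perm k n h p) = cB"
    using row_perm_column_sums[OF \<open>k \<ge> 1\<close> assms(6)] by metis
  define L where "L = (\<lambda>(p, h). 2 * k * h + row_perm k n h p + 1)"
  define f where "f = L \<circ> map_prod col id"
  have "bij_betw f ((A \<union> B) \<times> {0..<n}) {1..card (A \<union> B) * n}"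
    unfolding f_def L_def card_AB
    using bij_betw_map_prod[OF col bij_betw_id] bij_betw_row_blocks[OF row_perm_bij]
    by (rule bij_betw_trans)
  define C where "C = (\<Sum>h\<in>{0..<n}. 2 * k * h + 1)"
  have column_sum: "(\<Sum>h\<in>{0..<n}. f (g, h)) = C + (\<Sum>h\<in>{0..<n}. row_perm k n h (col g))" for g
    unfolding f_def L_def C_def sum.distrib[symmetric] by (intro sum.cong) auto
  show ?thesis
  proof (rule that)
    show "(\<Sum>h\<in>{0..<n}. f (a, h)) = C + cA" if "a \<in> A" for a
      using column_sum sum_A col_A that by simp
    show "(\<Sum>h\<in>{0..<n}. f (b, h)) = C + cB" if "b \<in> B" for b
      using column_sum sum_B col_B bij_betwE[OF col] that by simp
    show "C + cA \<noteq> C + cB" using \<open>cA \<noteq> cB\<close> by simp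
  qed fact
qed

theorem mainTheorem6:
  fixes V :: "'a set" and E :: "'a set set" and n m r :: nat
  assumes "sgraph V E" and "card V = m" and "n > 1" and "m > 1" and "r \<ge> 1"
    and "regular V E r" and "bipartite V E"
  shows "chi_ld (lexV V (emptyV n)) (lexE V E (emptyV n) (emptyE n)) = 2"
proof -
  obtain A B where AB: "bipartition V E A B"
    using assms(7) bipartite_iff_bipartition by blast
  have "finite V" using assms(1) unfolding sgraph_def by blast
  have V: "V = A \<union> B" "A \<inter> B = {}" using AB unfolding bipartition_def by auto
  then have "finite A" "finite B" using \<open>finite V\<close> by auto
  have "card A = card B" using regular_bipartition_card_eq[OF assms(1,6,5) AB] .
  moreover have "V \<noteq> {}" using assms(2,4) by auto
  ultimately have "A \<noteq> {}" using \<open>finite V\<close> V by auto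
  obtain f cA cB where "bij_betw f (V \<times> {0..<n}) {1..card V * n}"
    "\<And>a. a \<in> A \<Longrightarrow> (\<Sum>h\<in>{0..<n}. f (a, h)) = cA"
    "\<And>b. b \<in> B \<Longrightarrow> (\<Sum>h\<in>{0..<n}. f (b, h)) = cB" "cA \<noteq> cB"
    using ex_labeling_two_column_sums[OF \<open>finite A\<close> \<open>finite B\<close> V(2) \<open>card A = card B\<close> \<open>A \<noteq> {}\<close>]
      assms(3) unfolding V(1)[symmetric] by (metis Suc_leI one_add_one plus_1_eq_Suc)
  note f = ld_labeling_lex_emptyE[OF assms(1,6,5) AB this]
  obtain v w where "v \<in> V" "w \<in> nbhd E v"
    using \<open>V \<noteq> {}\<close> assms(5,6) unfolding regular_def by fastforce
  then have "w \<in> V" using sgraph_nbhd_subset[OF assms(1)] by blast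
  have "{(v, 0), (w, 0)} \<in> lexE V E (emptyV n) (emptyE n)"
    using \<open>v \<in> V\<close> \<open>w \<in> V\<close> \<open>w \<in> nbhd E v\<close> assms(3) by (simp add: lexE_emptyE_iff nbhd_def)
  moreover have "finite (lexV V (emptyV n))" "(v, 0) \<in> lexV V (emptyV n)" "(w, 0) \<in> lexV V (emptyV n)"
    using \<open>finite V\<close> \<open>v \<in> V\<close> \<open>w \<in> V\<close> assms(3) by (auto simp: lexV_def emptyV_def)
  ultimately show ?thesis
    using chi_ld_eq_2I[OF _ _ _ _ f] by blast
qed

end
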